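(* Let $k=2^{\ell}$ for an integer $\ell\ge 2$ and let $q=4k$. Let $a,b\in\mathfrak S_q$ be the permutations $$a=(c_0,c_1)(c_2,c_3)\cdots(c_{4k-2},c_{4k-1}),$$ and $b=C_1C_2$, where $C_1$ and $C_2$ are the following two disjoint $2k$-cycles: - $C_1$ is the cycle whose entries, in order, are: for $m=0,1,\dots,\frac{k-2}{2}$ successively the pair $c_{2m},\,c_{2(2m+k-1)}$; then for $n=0,1,\dots,\frac{k-4}{2}$ successively the pair $c_{2n+k},\,c_{2(2n+k)}$; and finally $c_{4k-1},\,c_{4k-4}$. That is, $C_1=(c_0,c_{2k-2},c_2,c_{2k+2},\dots,c_{k-2},c_{4k-6},c_k,c_{2k},c_{k+2},c_{2k+4},\dots,c_{2k-4},c_{4k-8},c_{4k-1},c_{4k-4})$. - $C_2$ is the cycle whose entries, in order, are: for $m=0,1,\dots,\frac{k-2}{2}$ successively the pair $c_{2m+1},\,c_{2(2m+k)+1}$; then for $n=0,1,\dots,\frac{k-4}{2}$ successively the pair $c_{2n+k+1},\,c_{2(2n+k)-1}$; and finally $c_{4k-2},\,c_{4k-5}$. That is, $C_2=(c_1,c_{2k+1},c_3,c_{2k+5},\dots,c_{k-1},c_{4k-3},c_{k+1},c_{2k-1},c_{k+3},c_{2k+3},\dots,c_{2k-3},c_{4k-9},c_{4k-2},c_{4k-5})$. Then $G_1=\{b^{j}a^{i}: 0\le j\le 2k-1,\ 0\le i\le 1\}$ is a subgroup of $\mathfrak S_q$ with $|G_1|=q$, and no element of $G_1$ other than the identity has a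 fixed point.
   Context: $q$ is a prime power and the elements of the finite field $\mathbb F_q$ are enumerated once and for all as $\mathbb F_q=\{c_0,c_1,\dots,c_{q-1}\}$. $\mathfrak S_q$ denotes the symmetric group of all permutations of $\mathbb F_q$; products of permutations are compositions applied right to left, $(\sigma\tau)(x)=\sigma(\tau(x))$, and permutations are written in cycle notation. *)

theory Defs
  imports "HOL-Algebra.Group" "HOL-Combinatorics.Cycles"
begin

definition perm_group :: "'a set \<Rightarrow> ('a \<Rightarrow> 'a) monoid" where
  "perm_group F = \<lparr>carrier = {p. p permutes F}, monoid.mult = (\<circ>), one = id\<rparr>"

definition C1_idx :: "nat \<Rightarrow> nat list" where
  "C1_idx k = concat (map (\<lambda>m. [2*m, 2*(2*m+k-1)]) [0..<(k-2) div 2 + 1])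
            @ concat (map (\<lambda>n. [2*n+k, 2*(2*n+k)]) [0..<(k-4) div 2 + 1])
            @ [4*k-1, 4*k-4]"

definition C2_idx :: "nat \<Rightarrow> nat list" where
  "C2_idx k = concat (map (\<lambda>m. [2*m+1, 2*(2*m+k)+1]) [0..<(k-2) div 2 + 1])
            @ concat (map (\<lambda>n. [2*n+k+1, 2*(2*n+k)-1]) [0..<(k-4) div 2 + 1])
            @ [4*k-2, 4*k-5]"

definition perm_a :: "(nat \<Rightarrow> 'a) \<Rightarrow> nat \<Rightarrow> 'a \<Rightarrow> 'a" where
  "perm_a c k = foldr (\<circ>) (map (\<lambda>i. cycle_of_list [c (2*i), c (2*i+1)]) [0..<2*k]) id"

definition perm_b :: "(nat \<Rightarrow> 'a) \<Rightarrow> nat \<Rightarrow> 'a \<Rightarrow> 'a" where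
  "perm_b c k = cycle_of_list (map c (C1_idx k)) \<circ> cycle_of_list (map c (C2_idx k))"

definition G1 :: "(nat \<Rightarrow> 'a) \<Rightarrow> nat \<Rightarrow> ('a \<Rightarrow> 'a) set" where
  "G1 c k = {(perm_b c k ^^ j) \<circ> (perm_a c k ^^ i) | j i. j \<le> 2*k-1 \<and> i \<le> 1}"

end

theory Submission
  imports Defs
begin

text \<open>Write \<open>k = 4(g + 1)\<close> and number the entries of \<open>C\<^sub>1\<close> and of \<open>C\<^sub>2\<close> by their positions
  \<open>0, \<dots>, 2k - 1\<close>. The two cycles together list each point exactly once, \<open>b\<close> advances positions
  by one inside each cycle, and \<open>a\<close> exchanges the entry at position \<open>p\<close> of \<open>C\<^sub>1\<close> with the entry
  at position \<open>partner p\<close> of \<open>C\<^sub>2\<close>, where \<open>partner\<close> fixes even positions and moves odd ones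
  by \<open>k\<close>. Hence \<open>partner (p + 1) = partner p + k + 1 (mod 2k)\<close>, i.e. \<open>a b = b\<^bsup>k+1\<^esup> a\<close>; with
  \<open>a\<^sup>2 = b\<^bsup>2k\<^esup> = 1\<close> this makes the products \<open>b\<^sup>j a\<^sup>i\<close> a group. It acts on the points as on
  pairs (cycle, position): \<open>b\<^sup>j\<close> shifts the position by \<open>j\<close> and \<open>a\<close> changes the cycle, so no
  non-identity element has a fixed point and the \<open>4k\<close> pairs \<open>(j, i)\<close> give distinct permutations.\<close>

section \<open>Products of transpositions and of disjoint cycles\<close>

definition pair_swap :: "nat \<Rightarrow> nat" where
  "pair_swap x = (if even x then x + 1 else x - 1)"

lemma pair_swap_pair_swap [simp]: "pair_swap (pair_swap x) = x"
  by (simp add: pair_swap_def)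

lemma pair_swap_less: "x < 2 * n \<Longrightarrow> pair_swap x < 2 * n"
  by (auto simp: pair_swap_def elim!: evenE)

lemma foldr_comp_upt_Suc:
  "foldr (\<circ>) (map f [0..<Suc n]) id = foldr (\<circ>) (map f [0..<n]) id \<circ> f n"
proof -
  have seed: "foldr (\<circ>) fs h = foldr (\<circ>) fs id \<circ> h" for fs :: "('a \<Rightarrow> 'a) list" and h :: "'a \<Rightarrow> 'a"
    by (induction fs) (simp_all add: o_assoc)
  show ?thesis
    using seed[of "map f [0..<n]" "f n"] by simp
qed

lemma pair_transpositions_outside:
  assumes "y \<notin> c ` {0..<2*n}"
  shows "foldr (\<circ>) (map (\<lambda>i. cycle_of_list [c (2*i), c (2*i+1)]) [0..<n]) id y = y"
  using assms
proof (induction n)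
  case (Suc n)
  then have "y \<notin> c ` {0..<2*n}" "y \<noteq> c (2*n)" "y \<noteq> c (2*n+1)"
    by auto
  then show ?case
    unfolding foldr_comp_upt_Suc using Suc.IH by (simp add: comp_def[abs_def] id_def)
qed simp

lemma pair_transpositions_apply:
  assumes "inj_on c {0..<2*n}" and "x < 2*n"
  shows "foldr (\<circ>) (map (\<lambda>i. cycle_of_list [c (2*i), c (2*i+1)]) [0..<n]) id (c x) = c (pair_swap x)"
  using assms
proof (induction n arbitrary: x)
  case 0
  then show ?case by simp
next
  case (Suc n)
  have inj: "inj_on c {0..<2*n}"
    using Suc.prems(1) by (rule inj_on_subset) auto
  have new: "c (2*n) \<notin> c ` {0..<2*n}" "c (2*n+1) \<notin> c ` {0..<2*n}"
    using Suc.prems(1) by (auto dest: inj_onD)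
  show ?case
  proof (cases "x < 2*n")
    case True
    then have "c x \<in> c ` {0..<2*n}"
      by simp
    then have "c x \<noteq> c (2*n)" "c x \<noteq> c (2*n+1)"
      using new by auto
    then show ?thesis
      unfolding foldr_comp_upt_Suc using Suc.IH[OF inj True] by (simp add: comp_def[abs_def] id_def)
  next
    case False
    then have "x = 2*n \<or> x = 2*n+1"
      using Suc.prems(2) by auto
    then show ?thesis
      unfolding foldr_comp_upt_Suc using new by (auto simp: pair_transpositions_outside[simplified] pair_swap_def)
  qed
qed

lemma cycle_of_list_nth:
  assumes "distinct xs" and "i < length xs"
  shows "cycle_of_list xs (xs ! i) = xs ! (Suc i mod length xs)"
proof -
  have "cycle_of_list xs (xs ! i) = map (cycle_of_list xs ^^ 1) xs ! i"
    using assms(2) by simp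
  also have "\<dots> = rotate 1 xs ! i"
    by (simp only: cyclic_rotation[OF assms(1)])
  also have "\<dots> = xs ! ((1 + i) mod length xs)"
    by (rule nth_rotate[OF assms(2)])
  finally show ?thesis by simp
qed

lemma disjoint_cycles_comp_nth:
  assumes "distinct xs" "distinct ys" "set xs \<inter> set ys = {}"
  shows "i < length xs \<Longrightarrow>
      (cycle_of_list xs \<circ> cycle_of_list ys) (xs ! i) = xs ! (Suc i mod length xs)"
    and "i < length ys \<Longrightarrow>
      (cycle_of_list xs \<circ> cycle_of_list ys) (ys ! i) = ys ! (Suc i mod length ys)"
proof -
  assume i: "i < length xs"
  then have "xs ! i \<notin> set ys"
    using assms(3) nth_mem by blast
  then show "(cycle_of_list xs \<circ> cycle_of_list ys) (xs ! i) = xs ! (Suc i mod length xs)"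
    using cycle_of_list_nth[OF assms(1) i] by (simp add: id_outside_supp)
next
  assume i: "i < length ys"
  then have "Suc i mod length ys < length ys"
    by (intro mod_less_divisor) auto
  then have "ys ! (Suc i mod length ys) \<notin> set xs"
    using assms(3) nth_mem by blast
  then show "(cycle_of_list xs \<circ> cycle_of_list ys) (ys ! i) = ys ! (Suc i mod length ys)"
    using cycle_of_list_nth[OF assms(2) i] by (simp add: id_outside_supp)
qed

lemma funpow_shift_mod:
  assumes step: "\<And>p. p < n \<Longrightarrow> f (h p) = h (Suc p mod n)" and p: "p < n"
  shows "(f ^^ j) (h p) = h ((p + j) mod n)"
proof (induction j)
  case 0
  show ?case using p by simp
next
  case (Suc j)
  have "(p + j) mod n < n"
    using p by simp
  then show ?case
    using Suc step by (simp add: mod_Suc_eq)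
qed

lemma mod_add_neq_self:
  fixes p j n :: nat
  assumes "p < n" "0 < j" "j < n"
  shows "(p + j) mod n \<noteq> p"
proof (cases "p + j < n")
  case True
  then show ?thesis using assms by simp
next
  case False
  then have "(p + j) mod n = p + j - n"
    using assms by (simp add: le_mod_geq)
  then show ?thesis using assms False by linarith
qed

section \<open>Products \<open>b\<^sup>j a\<^sup>i\<close> for an involution \<open>a\<close> normalising \<open>\<langle>b\<rangle>\<close>\<close>

lemma perm_group_inv_eqI:
  assumes "h permutes F" "x \<circ> h = id" "h \<circ> x = id"
  shows "inv\<^bsub>perm_group F\<^esub> x = h"
  unfolding m_inv_def perm_group_def
proof (simp, rule the_equality)
  show "h permutes F \<and> x \<circ> h = id \<and> h \<circ> x = id"
    using assms by simp
next
  fix y assume "y permutes F \<and> x \<circ> y = id \<and> y \<circ> x = id"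
  then show "y = h"
    using assms(2) by (metis comp_id id_comp o_assoc)
qed

context
  fixes a b :: "'a \<Rightarrow> 'a" and N m :: nat
  assumes a_involution: "a \<circ> a = id" and b_order: "b ^^ N = id" and N_pos: "0 < N"
    and a_b: "a \<circ> b = b ^^ m \<circ> a"
begin

lemma a_comp_funpow_b: "a \<circ> b ^^ j = b ^^ (m * j) \<circ> a"
proof (induction j)
  case 0
  then show ?case by simp
next
  case (Suc j)
  have "a \<circ> b ^^ Suc j = (a \<circ> b) \<circ> b ^^ j"
    by (simp add: o_assoc)
  also have "\<dots> = b ^^ m \<circ> (a \<circ> b ^^ j)"
    unfolding a_b by (simp add: o_assoc)
  also have "\<dots> = b ^^ (m * Suc j) \<circ> a"
    unfolding Suc by (simp add: o_assoc funpow_add)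
  finally show ?case .
qed

lemma funpow_a_comp_funpow_b: "a ^^ i \<circ> b ^^ j = b ^^ (m ^ i * j) \<circ> a ^^ i"
proof (induction i)
  case 0
  then show ?case by simp
next
  case (Suc i)
  have "a ^^ Suc i \<circ> b ^^ j = a \<circ> (a ^^ i \<circ> b ^^ j)"
    by (simp add: o_assoc)
  also have "\<dots> = (a \<circ> b ^^ (m ^ i * j)) \<circ> a ^^ i"
    by (simp only: Suc o_assoc)
  also have "\<dots> = b ^^ (m ^ Suc i * j) \<circ> a ^^ Suc i"
    unfolding a_comp_funpow_b by (simp add: o_assoc mult.assoc)
  finally show ?case .
qed

lemma funpow_a_mod: "a ^^ i = a ^^ (i mod 2)"
proof
  fix x
  have "(a ^^ 2) x = x"
    using a_involution by (simp add: numeral_2_eq_2 fun_eq_iff)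
  then show "(a ^^ i) x = (a ^^ (i mod 2)) x"
    by (simp add: funpow_mod_eq)
qed

lemma funpow_b_mod: "b ^^ j = b ^^ (j mod N)"
  by (rule ext) (simp add: funpow_mod_eq b_order)

lemma metacyclic_comp:
  "(b ^^ j \<circ> a ^^ i) \<circ> (b ^^ j' \<circ> a ^^ i') = b ^^ (j + m ^ i * j') \<circ> a ^^ (i + i')"
proof -
  have "(b ^^ j \<circ> a ^^ i) \<circ> (b ^^ j' \<circ> a ^^ i') = b ^^ j \<circ> (a ^^ i \<circ> b ^^ j') \<circ> a ^^ i'"
    by (simp add: o_assoc)
  then show ?thesis
    unfolding funpow_a_comp_funpow_b by (simp add: o_assoc funpow_add)
qed

text \<open>The inverse of \<open>b\<^sup>j a\<^sup>i\<close> is \<open>a\<^sup>i b\<^bsup>(N-1) j\<^esup>\<close>, moved into normal form.\<close>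

lemma metacyclic_inverse:
  "(b ^^ j \<circ> a ^^ i) \<circ> (b ^^ (m ^ i * ((N - 1) * j)) \<circ> a ^^ i) = id"
  "(b ^^ (m ^ i * ((N - 1) * j)) \<circ> a ^^ i) \<circ> (b ^^ j \<circ> a ^^ i) = id"
proof -
  have a: "(a ^^ i) ((a ^^ i) x) = x" for x
    using funpow_a_mod[of "i + i"] by (simp add: funpow_add fun_eq_iff)
  have "j + (N - 1) * j = N * j" "(N - 1) * j + j = N * j"
    using N_pos by (cases N; simp)+
  moreover have "b ^^ (N * j) = id"
    by (subst funpow_b_mod) simp
  ultimately have b: "(b ^^ j) ((b ^^ ((N - 1) * j)) x) = x" "(b ^^ ((N - 1) * j)) ((b ^^ j) x) = x"
    for x by (metis funpow_add comp_apply id_apply)+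
  show "(b ^^ j \<circ> a ^^ i) \<circ> (b ^^ (m ^ i * ((N - 1) * j)) \<circ> a ^^ i) = id"
    "(b ^^ (m ^ i * ((N - 1) * j)) \<circ> a ^^ i) \<circ> (b ^^ j \<circ> a ^^ i) = id"
    unfolding funpow_a_comp_funpow_b[symmetric] by (simp_all add: fun_eq_iff a b[simplified])
qed

lemma metacyclic_subgroup:
  assumes "a permutes F" "b permutes F"
  shows "subgroup {b ^^ j \<circ> a ^^ i | j i. True} (perm_group F)" (is "subgroup ?G _")
proof (rule subgroup.intro)
  show "?G \<subseteq> carrier (perm_group F)"
    using assms by (auto simp: perm_group_def intro!: permutes_compose permutes_funpow)
next
  fix x y assume "x \<in> ?G" "y \<in> ?G"
  then show "x \<otimes>\<^bsub>perm_group F\<^esub> y \<in> ?G"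
    by (auto simp: perm_group_def metacyclic_comp; blast)
next
  show "\<one>\<^bsub>perm_group F\<^esub> \<in> ?G"
    by (simp add: perm_group_def) (rule exI[of _ 0], rule exI[of _ 0], simp)
next
  fix x assume "x \<in> ?G"
  then obtain j i where x: "x = b ^^ j \<circ> a ^^ i" by blast
  have "inv\<^bsub>perm_group F\<^esub> x = b ^^ (m ^ i * ((N - 1) * j)) \<circ> a ^^ i"
    using metacyclic_inverse assms unfolding x
    by (intro perm_group_inv_eqI) (auto intro!: permutes_compose permutes_funpow)
  then show "inv\<^bsub>perm_group F\<^esub> x \<in> ?G" by blast
qed

lemma metacyclic_bounded:
  "{b ^^ j \<circ> a ^^ i | j i. True} = {b ^^ j \<circ> a ^^ i | j i. j < N \<and> i < 2}"
proof (intro equalityI subsetI)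
  fix x assume "x \<in> {b ^^ j \<circ> a ^^ i | j i. True}"
  then obtain j i where "x = b ^^ j \<circ> a ^^ i" by blast
  then have "x = b ^^ (j mod N) \<circ> a ^^ (i mod 2)"
    by (metis funpow_a_mod funpow_b_mod)
  moreover have "j mod N < N" "i mod 2 < 2"
    using N_pos by simp_all
  ultimately show "x \<in> {b ^^ j \<circ> a ^^ i | j i. j < N \<and> i < 2}"
    by blast
qed blast

end

section \<open>The entries of the two cycles\<close>

text \<open>For \<open>k = 4g + 4\<close>, \<open>C1_entry g p\<close> and \<open>C2_entry g p\<close> are closed forms of the \<open>p\<close>-th entries
  of \<open>C1_idx k\<close> and \<open>C2_idx k\<close> (see \<open>C1_idx_eq\<close>, \<open>C2_idx_eq\<close>), and \<open>a\<close> maps the entry at position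
  \<open>p\<close> of \<open>C\<^sub>1\<close> to the entry at position \<open>partner g p\<close> of \<open>C\<^sub>2\<close>.\<close>

definition C1_entry :: "nat \<Rightarrow> nat \<Rightarrow> nat" where
  "C1_entry g p = (let r = p div 2 in
     if even p then (if r < 4*g+3 then 2*r else 16*g+15)
     else if r < 2*g+2 then 4*r+8*g+6 else if r < 4*g+3 then 4*r else 16*g+12)"

definition C2_entry :: "nat \<Rightarrow> nat \<Rightarrow> nat" where
  "C2_entry g p = (let r = p div 2 in
     if even p then (if r < 4*g+3 then 2*r+1 else 16*g+14)
     else if r < 2*g+2 then 4*r+8*g+9 else if r < 4*g+3 then 4*r-1 else 16*g+11)"

definition partner :: "nat \<Rightarrow> nat \<Rightarrow> nat" where
  "partner g p = (if even p then p else if p < 4*g+4 then p + (4*g+4) else p - (4*g+4))"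

lemma even_odd_cases:
  fixes p :: nat
  obtains r where "p = 2*r" | r where "p = Suc (2*r)"
  by (metis evenE oddE Suc_eq_plus1)

lemma C1_entry_even: "C1_entry g (2*r) = (if r < 4*g+3 then 2*r else 16*g+15)"
  by (simp add: C1_entry_def)

lemma C1_entry_odd:
  "C1_entry g (Suc (2*r)) = (if r < 2*g+2 then 4*r+8*g+6 else if r < 4*g+3 then 4*r else 16*g+12)"
  by (simp add: C1_entry_def)

lemma C2_entry_even: "C2_entry g (2*r) = (if r < 4*g+3 then 2*r+1 else 16*g+14)"
  by (simp add: C2_entry_def)

lemma C2_entry_odd:
  "C2_entry g (Suc (2*r)) = (if r < 2*g+2 then 4*r+8*g+9 else if r < 4*g+3 then 4*r-1 else 16*g+11)"
  by (simp add: C2_entry_def)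

lemma partner_even: "partner g (2*r) = 2*r"
  by (simp add: partner_def)

lemma partner_odd:
  "partner g (Suc (2*r)) = (if r < 2*g+2 then 2*(r+2*g+2)+1 else 2*(r-(2*g+2))+1)"
  by (simp add: partner_def) arith

lemma partner_less: "p < 8*g+8 \<Longrightarrow> partner g p < 8*g+8"
  by (auto simp: partner_def)

lemma partner_partner: "p < 8*g+8 \<Longrightarrow> partner g (partner g p) = p"
  by (auto simp: partner_def)

lemma partner_Suc_mod:
  assumes "p < 8*g+8"
  shows "partner g (Suc p mod (8*g+8)) = (partner g p + (4*g+5)) mod (8*g+8)"
proof (cases "Suc p = 8*g+8")
  case True
  then have "p = 8*g+7"
    by simp
  then have "partner g p + (4*g+5) = 8*g+8"
    by (simp add: partner_def)
  moreover have "Suc p mod (8*g+8) = 0"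
    by (simp only: True mod_self)
  moreover have "partner g 0 = 0"
    by (simp add: partner_def)
  ultimately show ?thesis
    by simp
next
  case False
  then have "Suc p < 8*g+8"
    using assms by simp
  then show ?thesis
    by (auto simp: partner_def mod_if)
qed

lemma pair_swap_C1_entry:
  assumes "p < 8*g+8"
  shows "pair_swap (C1_entry g p) = C2_entry g (partner g p)"
proof (cases p rule: even_odd_cases)
  case (1 r)
  then show ?thesis
    using assms by (auto simp: C1_entry_even C2_entry_even partner_even pair_swap_def)
next
  case (2 r)
  consider "r < 2*g+1" | "r = 2*g+1" | "2*g+2 \<le> r" "r < 4*g+3" | "r = 4*g+3"
    using 2 assms by linarith
  then show ?thesis
  proof cases
    case 1
    have "C1_entry g p = 2*(2*r+4*g+3)" "partner g p = Suc (2*(r+2*g+2))"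
      using 1 by (simp_all add: 2 C1_entry_odd partner_odd)
    moreover have "C2_entry g (Suc (2*(r+2*g+2))) = 4*(r+2*g+2) - 1"
      using 1 by (subst C2_entry_odd) simp
    ultimately show ?thesis by (simp add: pair_swap_def)
  next
    case 2
    have "C1_entry g p = 4*r+8*g+6" "partner g p = Suc (2*(4*g+3))"
      unfolding \<open>p = Suc (2*r)\<close> C1_entry_odd partner_odd using 2 by simp_all
    moreover have "C2_entry g (Suc (2*(4*g+3))) = 16*g+11"
      by (subst C2_entry_odd) simp
    ultimately show ?thesis using 2 by (simp add: pair_swap_def)
  next
    case 3
    have "C1_entry g p = 2*(2*r)" "partner g p = Suc (2*(r-(2*g+2)))"
      using 3 by (simp_all add: 2 C1_entry_odd partner_odd)
    moreover have "C2_entry g (Suc (2*(r-(2*g+2)))) = 4*(r-(2*g+2))+8*g+9"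
      using 3 by (subst C2_entry_odd) simp
    ultimately show ?thesis using 3 by (simp add: pair_swap_def)
  next
    case 4
    have "C1_entry g p = 16*g+12" "partner g p = Suc (2*(2*g+1))"
      unfolding \<open>p = Suc (2*r)\<close> C1_entry_odd partner_odd using 4 by simp_all
    moreover have "C2_entry g (Suc (2*(2*g+1))) = 4*(2*g+1)+8*g+9"
      by (subst C2_entry_odd) simp
    ultimately show ?thesis by (simp add: pair_swap_def)
  qed
qed

lemma C2_entry_eq_pair_swap:
  "p < 8*g+8 \<Longrightarrow> C2_entry g p = pair_swap (C1_entry g (partner g p))"
  using pair_swap_C1_entry[OF partner_less, of p g] partner_partner[of p g] by simp

lemma C1_entry_cases:
  assumes "p < 8*g+8"
  shows "(\<exists>r. p = 2*r \<and> r < 4*g+3 \<and> C1_entry g p = 2*r)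
    \<or> (p = 8*g+6 \<and> C1_entry g p = 16*g+15)
    \<or> (\<exists>r. p = Suc (2*r) \<and> r < 2*g+2 \<and> C1_entry g p = 4*r+8*g+6)
    \<or> (\<exists>r. p = Suc (2*r) \<and> 2*g+2 \<le> r \<and> r < 4*g+3 \<and> C1_entry g p = 4*r)
    \<or> (p = 8*g+7 \<and> C1_entry g p = 16*g+12)"
proof (cases p rule: even_odd_cases)
  case (1 r)
  show ?thesis
  proof (cases "r < 4*g+3")
    case True
    then show ?thesis using 1 by (simp add: C1_entry_even)
  next
    case False
    then have "r = 4*g+3" using 1 assms by linarith
    then have "C1_entry g p = 16*g+15"
      unfolding 1 C1_entry_even by simp
    then show ?thesis using 1 \<open>r = 4*g+3\<close> by simp
  qed
next
  case (2 r)
  show ?thesis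
  proof (cases "r < 4*g+3")
    case True
    then show ?thesis using 2 by (cases "r < 2*g+2") (simp_all add: C1_entry_odd)
  next
    case False
    then have "r = 4*g+3" using 2 assms by linarith
    then have "C1_entry g p = 16*g+12"
      unfolding 2 C1_entry_odd by simp
    then show ?thesis using 2 \<open>r = 4*g+3\<close> by simp
  qed
qed

lemma C1_entry_less: "p < 8*g+8 \<Longrightarrow> C1_entry g p < 16*g+16"
  using C1_entry_cases[of p g] by auto

text \<open>All entries of \<open>C\<^sub>1\<close> are even except the last but one; this separates \<open>C\<^sub>1\<close> from \<open>C\<^sub>2\<close>.\<close>

lemma C1_entry_parity:
  "p < 8*g+8 \<Longrightarrow> C1_entry g p \<noteq> 16*g+14 \<and> (odd (C1_entry g p) \<longrightarrow> C1_entry g p = 16*g+15)"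
  using C1_entry_cases[of p g] by auto

lemma inj_on_C1_entry: "inj_on (C1_entry g) {0..<8*g+8}"
proof (rule inj_onI)
  fix p p' assume "p \<in> {0..<8*g+8}" "p' \<in> {0..<8*g+8}" and eq: "C1_entry g p = C1_entry g p'"
  then have p: "p < 8*g+8" and p': "p' < 8*g+8"
    by simp_all
  have residues: "4*r + 8*g + 6 \<noteq> 4*s" "2*r \<noteq> 16*g + 15" for r s :: nat
    by presburger+
  show "p = p'"
    using C1_entry_cases[OF p] C1_entry_cases[OF p'] eq residues
    by (elim disjE exE conjE; simp; metis)
qed

lemma C1_entry_eq_iff: "p < 8*g+8 \<Longrightarrow> p' < 8*g+8 \<Longrightarrow> C1_entry g p = C1_entry g p' \<longleftrightarrow> p = p'"
  using inj_on_eq_iff[OF inj_on_C1_entry[of g], of p p'] by simp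

lemma C2_entry_less: "p < 8*g+8 \<Longrightarrow> C2_entry g p < 16*g+16"
  using C1_entry_less[OF partner_less, of p g] pair_swap_less[of _ "8*g+8"]
  by (simp add: C2_entry_eq_pair_swap)

lemma inj_on_C2_entry: "inj_on (C2_entry g) {0..<8*g+8}"
proof (rule inj_onI)
  fix p p' assume "p \<in> {0..<8*g+8}" "p' \<in> {0..<8*g+8}" and eq: "C2_entry g p = C2_entry g p'"
  then have p: "p < 8*g+8" and p': "p' < 8*g+8"
    by simp_all
  have "pair_swap (C1_entry g (partner g p)) = pair_swap (C1_entry g (partner g p'))"
    using eq p p' by (simp add: C2_entry_eq_pair_swap)
  then have "pair_swap (pair_swap (C1_entry g (partner g p)))
      = pair_swap (pair_swap (C1_entry g (partner g p')))"
    by (rule arg_cong)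
  then have "C1_entry g (partner g p) = C1_entry g (partner g p')"
    by simp
  moreover have "partner g p \<in> {0..<8*g+8}" "partner g p' \<in> {0..<8*g+8}"
    using p p' by (simp_all add: partner_less)
  ultimately have "partner g p = partner g p'"
    by (rule inj_onD[OF inj_on_C1_entry])
  then have "partner g (partner g p) = partner g (partner g p')"
    by simp
  then show "p = p'"
    using p p' by (simp add: partner_partner)
qed

lemma C2_entry_eq_iff: "p < 8*g+8 \<Longrightarrow> p' < 8*g+8 \<Longrightarrow> C2_entry g p = C2_entry g p' \<longleftrightarrow> p = p'"
  using inj_on_eq_iff[OF inj_on_C2_entry[of g], of p p'] by simp

lemma C1_entry_neq_C2_entry:
  assumes "p < 8*g+8" "q < 8*g+8"
  shows "C1_entry g p \<noteq> C2_entry g q"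
  using C1_entry_parity[OF assms(1)] C1_entry_parity[OF partner_less[OF assms(2)]]
  unfolding C2_entry_eq_pair_swap[OF assms(2)] pair_swap_def
  by (auto split: if_splits)

lemma C1_C2_entries_cover:
  "C1_entry g ` {0..<8*g+8} \<union> C2_entry g ` {0..<8*g+8} = {0..<16*g+16}"
    (is "?A \<union> ?B = _")
proof -
  have sub: "?A \<union> ?B \<subseteq> {0..<16*g+16}"
    using C1_entry_less C2_entry_less by auto
  have "?A \<inter> ?B = {}"
    using C1_entry_neq_C2_entry by fastforce
  then have "card (?A \<union> ?B) = card {0..<16*g+16}"
    by (simp add: card_Un_disjoint card_image inj_on_C1_entry inj_on_C2_entry)
  then show ?thesis
    using card_subset_eq[OF _ sub] by simp
qed

lemma concat_pairs_eq_map: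
  "concat (map (\<lambda>m. [f m, h m]) [0..<n])
    = map (\<lambda>p. if even p then f (p div 2) else h (p div 2)) [0..<2*n]"
  by (induction n) auto

lemma upt_split_C_idx:
  "[0..<8*g+8] = [0..<4*g+4] @ map (\<lambda>q. q + (4*g+4)) [0..<4*g+2] @ [8*g+6, 8*g+7]"
proof -
  have sums: "4*g+4+(4*g+4) = 8*g+8" "8*g+6+2 = 8*g+8" "4*g+2+(4*g+4) = 8*g+6"
    by simp_all
  have "[0..<8*g+8] = [0..<4*g+4] @ [4*g+4..<8*g+8]"
    using upt_add_eq_append[of 0 "4*g+4" "4*g+4", OF le0] unfolding sums .
  also have "[4*g+4..<8*g+8] = [4*g+4..<8*g+6] @ [8*g+6..<8*g+8]"
    using upt_add_eq_append[of "4*g+4" "8*g+6" 2] unfolding sums by simp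
  also have "[4*g+4..<8*g+6] = map (\<lambda>q. q + (4*g+4)) [0..<4*g+2]"
    using map_add_upt[of "4*g+4" "4*g+2"] unfolding sums by simp
  also have "[8*g+6..<8*g+8] = [8*g+6, 8*g+7]"
    by (simp add: upt_conv_Cons del: upt_Suc)
  finally show ?thesis .
qed

lemma C1_entry_upper_half:
  assumes "q < 4*g+2"
  shows "C1_entry g (q+(4*g+4))
    = (if even q then 2*(q div 2)+(4*g+4) else 2*(2*(q div 2)+(4*g+4)))"
proof (cases q rule: even_odd_cases)
  case (1 s)
  have pos: "q+(4*g+4) = 2*(s+2*g+2)"
    using 1 by simp
  show ?thesis
    unfolding pos C1_entry_even using 1 assms by simp
next
  case (2 s)
  have pos: "q+(4*g+4) = Suc (2*(s+2*g+2))"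
    using 2 by simp
  show ?thesis
    unfolding pos C1_entry_odd using 2 assms by simp
qed

lemma C2_entry_upper_half:
  assumes "q < 4*g+2"
  shows "C2_entry g (q+(4*g+4))
    = (if even q then 2*(q div 2)+(4*g+4)+1 else 2*(2*(q div 2)+(4*g+4))-1)"
proof (cases q rule: even_odd_cases)
  case (1 s)
  have pos: "q+(4*g+4) = 2*(s+2*g+2)"
    using 1 by simp
  show ?thesis
    unfolding pos C2_entry_even using 1 assms by simp
next
  case (2 s)
  have pos: "q+(4*g+4) = Suc (2*(s+2*g+2))"
    using 2 by simp
  show ?thesis
    unfolding pos C2_entry_odd using 2 assms by simp
qed

lemma C1_idx_eq: "C1_idx (4*g+4) = map (C1_entry g) [0..<8*g+8]"
proof -
  have bounds: "(4*g+4-2) div 2 + 1 = 2*g+2" "(4*g+4-4) div 2 + 1 = 2*g+1"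
    and double_bound: "2*(2*g+2) = 4*g+4" "2*(2*g+1) = 4*g+2"
    by simp_all
  have front: "concat (map (\<lambda>m. [2*m, 2*(2*m+(4*g+4)-1)]) [0..<2*g+2]) = map (C1_entry g) [0..<4*g+4]"
    unfolding concat_pairs_eq_map double_bound
    by (intro map_cong) (auto simp: C1_entry_def Let_def elim!: evenE oddE)
  have middle: "concat (map (\<lambda>n. [2*n+(4*g+4), 2*(2*n+(4*g+4))]) [0..<2*g+1])
      = map (\<lambda>q. C1_entry g (q+(4*g+4))) [0..<4*g+2]"
    unfolding concat_pairs_eq_map double_bound
    by (intro map_cong refl) (simp add: C1_entry_upper_half del: upt_Suc)
  have last: "[4*(4*g+4)-1, 4*(4*g+4)-4] = [C1_entry g (8*g+6), C1_entry g (8*g+7)]"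
  proof -
    have "8*g+6 = 2*(4*g+3)" and "8*g+7 = Suc (2*(4*g+3))"
      by simp_all
    then show ?thesis
      by (simp only: C1_entry_even C1_entry_odd) simp
  qed
  have "map (C1_entry g) [0..<8*g+8] = map (C1_entry g) [0..<4*g+4]
      @ map (\<lambda>q. C1_entry g (q+(4*g+4))) [0..<4*g+2] @ [C1_entry g (8*g+6), C1_entry g (8*g+7)]"
    unfolding upt_split_C_idx by (simp only: map_append map_map comp_def list.map)
  then show ?thesis
    unfolding C1_idx_def bounds front middle last by (rule sym)
qed

lemma C2_idx_eq: "C2_idx (4*g+4) = map (C2_entry g) [0..<8*g+8]"
proof -
  have bounds: "(4*g+4-2) div 2 + 1 = 2*g+2" "(4*g+4-4) div 2 + 1 = 2*g+1"
    and double_bound: "2*(2*g+2) = 4*g+4" "2*(2*g+1) = 4*g+2"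
    by simp_all
  have front: "concat (map (\<lambda>m. [2*m+1, 2*(2*m+(4*g+4))+1]) [0..<2*g+2]) = map (C2_entry g) [0..<4*g+4]"
    unfolding concat_pairs_eq_map double_bound
    by (intro map_cong) (auto simp: C2_entry_def Let_def elim!: evenE oddE)
  have middle: "concat (map (\<lambda>n. [2*n+(4*g+4)+1, 2*(2*n+(4*g+4))-1]) [0..<2*g+1])
      = map (\<lambda>q. C2_entry g (q+(4*g+4))) [0..<4*g+2]"
    unfolding concat_pairs_eq_map double_bound
    by (intro map_cong refl) (simp add: C2_entry_upper_half del: upt_Suc)
  have last: "[4*(4*g+4)-2, 4*(4*g+4)-5] = [C2_entry g (8*g+6), C2_entry g (8*g+7)]"
  proof -
    have "8*g+6 = 2*(4*g+3)" and "8*g+7 = Suc (2*(4*g+3))"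
      by simp_all
    then show ?thesis
      by (simp only: C2_entry_even C2_entry_odd) simp
  qed
  have "map (C2_entry g) [0..<8*g+8] = map (C2_entry g) [0..<4*g+4]
      @ map (\<lambda>q. C2_entry g (q+(4*g+4))) [0..<4*g+2] @ [C2_entry g (8*g+6), C2_entry g (8*g+7)]"
    unfolding upt_split_C_idx by (simp only: map_append map_map comp_def list.map)
  then show ?thesis
    unfolding C2_idx_def bounds front middle last by (rule sym)
qed

section \<open>The group \<open>G\<^sub>1\<close>\<close>

context
  fixes c :: "nat \<Rightarrow> 'a" and F :: "'a set" and k :: nat
  assumes bij: "bij_betw c {0..<4*k} F"
begin

lemma image_points: "c ` {0..<4*k} = F"
  using bij by (simp add: bij_betw_def)

lemma point_eq_iff: "x < 4*k \<Longrightarrow> y < 4*k \<Longrightarrow> c x = c y \<longleftrightarrow> x = y"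
  using bij by (auto simp: bij_betw_def dest: inj_onD)

lemma perm_a_apply:
  assumes "x < 4*k"
  shows "perm_a c k (c x) = c (pair_swap x)"
proof -
  have "inj_on c {0..<2*(2*k)}"
    using bij by (simp add: bij_betw_def)
  then show ?thesis
    unfolding perm_a_def using pair_transpositions_apply[of c "2*k" x] assms by simp
qed

lemma perm_a_outside: "y \<notin> F \<Longrightarrow> perm_a c k y = y"
  unfolding perm_a_def using pair_transpositions_outside[of y c "2*k"] image_points by simp

lemma perm_a_involution: "perm_a c k \<circ> perm_a c k = id"
proof
  fix x
  show "(perm_a c k \<circ> perm_a c k) x = id x"
  proof (cases "x \<in> F")
    case True
    then obtain y where y: "y < 4*k" "x = c y"
      using image_points by auto
    moreover have "pair_swap y < 4*k"
      using y(1) pair_swap_less[of y "2*k"] by simp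
    ultimately show ?thesis
      by (simp add: perm_a_apply)
  next
    case False
    then show ?thesis
      by (simp add: perm_a_outside)
  qed
qed

lemma perm_a_permutes: "perm_a c k permutes F"
proof -
  have "bij (perm_a c k)"
    using perm_a_involution perm_a_involution by (rule o_bij)
  then show ?thesis
    unfolding permutes_def bij_iff using perm_a_outside by blast
qed

context
  fixes g :: nat
  assumes k_eq: "k = 4*g+4"
begin

lemma k_pos: "0 < k"
  using k_eq by simp

lemma partner_less': "p < 2*k \<Longrightarrow> partner g p < 2*k"
  using partner_less[of p g] k_eq by simp

lemma partner_Suc_mod':
  assumes "p < 2*k"
  shows "partner g (Suc p mod (2*k)) = (partner g p + (k+1)) mod (2*k)"
proof -
  have k2: "2*k = 8*g+8" and k1: "k+1 = 4*g+5"
    using k_eq by simp_all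
  show ?thesis
    unfolding k2 k1 using assms unfolding k2 by (rule partner_Suc_mod)
qed

lemma C1_point_in: "p < 2*k \<Longrightarrow> c (C1_entry g p) \<in> F"
  using C1_entry_less[of p g] image_points k_eq by auto

lemma C2_point_in: "p < 2*k \<Longrightarrow> c (C2_entry g p) \<in> F"
  using C2_entry_less[of p g] image_points k_eq by auto

lemma C1_point_eq_iff:
  "p < 2*k \<Longrightarrow> p' < 2*k \<Longrightarrow> c (C1_entry g p) = c (C1_entry g p') \<longleftrightarrow> p = p'"
  using point_eq_iff[of "C1_entry g p" "C1_entry g p'"] C1_entry_less C1_entry_eq_iff k_eq by simp

lemma C2_point_eq_iff:
  "p < 2*k \<Longrightarrow> p' < 2*k \<Longrightarrow> c (C2_entry g p) = c (C2_entry g p') \<longleftrightarrow> p = p'"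
  using point_eq_iff[of "C2_entry g p" "C2_entry g p'"] C2_entry_less C2_entry_eq_iff k_eq by simp

lemma C1_point_neq_C2_point: "p < 2*k \<Longrightarrow> q < 2*k \<Longrightarrow> c (C1_entry g p) \<noteq> c (C2_entry g q)"
  using point_eq_iff C1_entry_less C2_entry_less C1_entry_neq_C2_entry k_eq by simp

lemma points_cases:
  assumes "x \<in> F"
  obtains p where "p < 2*k" "x = c (C1_entry g p)" | p where "p < 2*k" "x = c (C2_entry g p)"
proof -
  obtain y where y: "y < 4*k" "x = c y"
    using assms image_points by auto
  have "C1_entry g ` {0..<2*k} \<union> C2_entry g ` {0..<2*k} = {0..<4*k}"
    using C1_C2_entries_cover[of g] unfolding k_eq by simp
  then have "y \<in> C1_entry g ` {0..<2*k} \<union> C2_entry g ` {0..<2*k}"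
    using y(1) by simp
  then show ?thesis
    using that y(2) by auto
qed

lemma perm_a_C1_point: "p < 2*k \<Longrightarrow> perm_a c k (c (C1_entry g p)) = c (C2_entry g (partner g p))"
  using perm_a_apply[of "C1_entry g p"] C1_entry_less[of p g] pair_swap_C1_entry[of p g] k_eq by simp

lemma perm_a_C2_point: "p < 2*k \<Longrightarrow> perm_a c k (c (C2_entry g p)) = c (C1_entry g (partner g p))"
  using perm_a_apply[of "C2_entry g p"] C2_entry_less[of p g] C2_entry_eq_pair_swap[of p g] k_eq
  by simp

lemma cycle_lists:
  "map c (C1_idx k) = map (\<lambda>p. c (C1_entry g p)) [0..<2*k]"
  "map c (C2_idx k) = map (\<lambda>p. c (C2_entry g p)) [0..<2*k]"
  using C1_idx_eq[of g] C2_idx_eq[of g] k_eq by simp_all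

lemma cycles_distinct_disjoint:
  "distinct (map c (C1_idx k))" "distinct (map c (C2_idx k))"
  "set (map c (C1_idx k)) \<inter> set (map c (C2_idx k)) = {}"
  unfolding cycle_lists
  by (auto simp: distinct_map inj_on_def C1_point_eq_iff C2_point_eq_iff C1_point_neq_C2_point)

lemma perm_b_C1_point: "p < 2*k \<Longrightarrow> perm_b c k (c (C1_entry g p)) = c (C1_entry g (Suc p mod (2*k)))"
  using disjoint_cycles_comp_nth(1)[OF cycles_distinct_disjoint, of p]
  unfolding perm_b_def cycle_lists by simp

lemma perm_b_C2_point: "p < 2*k \<Longrightarrow> perm_b c k (c (C2_entry g p)) = c (C2_entry g (Suc p mod (2*k)))"
  using disjoint_cycles_comp_nth(2)[OF cycles_distinct_disjoint, of p]
  unfolding perm_b_def cycle_lists by simp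

lemma funpow_perm_b_C1_point:
  "p < 2*k \<Longrightarrow> (perm_b c k ^^ j) (c (C1_entry g p)) = c (C1_entry g ((p + j) mod (2*k)))"
  using funpow_shift_mod[of "2*k" "perm_b c k" "\<lambda>p. c (C1_entry g p)" p j] perm_b_C1_point by simp

lemma funpow_perm_b_C2_point:
  "p < 2*k \<Longrightarrow> (perm_b c k ^^ j) (c (C2_entry g p)) = c (C2_entry g ((p + j) mod (2*k)))"
  using funpow_shift_mod[of "2*k" "perm_b c k" "\<lambda>p. c (C2_entry g p)" p j] perm_b_C2_point by simp

lemma perm_b_permutes: "perm_b c k permutes F"
proof -
  have "set (map c (C1_idx k)) \<subseteq> F" and "set (map c (C2_idx k)) \<subseteq> F"
    unfolding cycle_lists using C1_point_in C2_point_in by auto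
  then show ?thesis
    unfolding perm_b_def by (intro permutes_compose permutes_subset[OF cycle_permutes])
qed

lemma perm_b_order: "perm_b c k ^^ (2*k) = id"
proof
  fix x
  show "(perm_b c k ^^ (2*k)) x = id x"
  proof (cases "x \<in> F")
    case True
    then show ?thesis
      by (cases rule: points_cases) (simp_all add: funpow_perm_b_C1_point funpow_perm_b_C2_point)
  next
    case False
    then show ?thesis
      using permutes_not_in[OF permutes_funpow[OF perm_b_permutes]] by simp
  qed
qed

text \<open>The relation \<open>a b = b\<^bsup>k+1\<^esup> a\<close> is \<open>partner_Suc_mod\<close> read on points.\<close>

lemma perm_a_comp_perm_b: "perm_a c k \<circ> perm_b c k = perm_b c k ^^ (k+1) \<circ> perm_a c k"
proof
  fix x
  show "(perm_a c k \<circ> perm_b c k) x = (perm_b c k ^^ (k+1) \<circ> perm_a c k) x"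
  proof (cases "x \<in> F")
    case True
    then show ?thesis
    proof (cases rule: points_cases)
      case (1 p)
      have "(perm_a c k \<circ> perm_b c k) x = c (C2_entry g (partner g (Suc p mod (2*k))))"
        using 1 k_pos by (simp add: perm_b_C1_point perm_a_C1_point)
      also have "\<dots> = c (C2_entry g ((partner g p + (k+1)) mod (2*k)))"
        using 1 by (simp add: partner_Suc_mod')
      also have "\<dots> = (perm_b c k ^^ (k+1)) (c (C2_entry g (partner g p)))"
        using funpow_perm_b_C2_point[OF partner_less'[OF 1(1)], of "k+1"] by (rule sym)
      also have "\<dots> = (perm_b c k ^^ (k+1) \<circ> perm_a c k) x"
        unfolding 1(2) comp_apply perm_a_C1_point[OF 1(1)] ..
      finally show ?thesis .
    next
      case (2 p)
      have "(perm_a c k \<circ> perm_b c k) x = c (C1_entry g (partner g (Suc p mod (2*k))))"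
        using 2 k_pos by (simp add: perm_b_C2_point perm_a_C2_point)
      also have "\<dots> = c (C1_entry g ((partner g p + (k+1)) mod (2*k)))"
        using 2 by (simp add: partner_Suc_mod')
      also have "\<dots> = (perm_b c k ^^ (k+1)) (c (C1_entry g (partner g p)))"
        using funpow_perm_b_C1_point[OF partner_less'[OF 2(1)], of "k+1"] by (rule sym)
      also have "\<dots> = (perm_b c k ^^ (k+1) \<circ> perm_a c k) x"
        unfolding 2(2) comp_apply perm_a_C2_point[OF 2(1)] ..
      finally show ?thesis .
    qed
  next
    case False
    then show ?thesis
      using permutes_not_in[OF permutes_funpow[OF perm_b_permutes]] permutes_not_in[OF perm_b_permutes]
      by (simp add: perm_a_outside)
  qed
qed

lemma G1_eq_metacyclic: "G1 c k = {perm_b c k ^^ j \<circ> perm_a c k ^^ i | j i. j < 2*k \<and> i < 2}"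
proof -
  have "j \<le> 2*k - 1 \<longleftrightarrow> j < 2*k" "i \<le> 1 \<longleftrightarrow> i < 2" for i j :: nat
    using k_pos by linarith+
  then show ?thesis
    unfolding G1_def by simp
qed

lemma G1_subgroup: "subgroup (G1 c k) (perm_group F)"
  using metacyclic_subgroup[OF perm_a_involution perm_b_order _ perm_a_comp_perm_b perm_a_permutes
      perm_b_permutes]
    metacyclic_bounded[OF perm_a_involution perm_b_order _ perm_a_comp_perm_b] k_pos
  by (simp add: G1_eq_metacyclic)

lemma card_G1: "card (G1 c k) = 4*k"
proof -
  let ?x = "c (C1_entry g 0)"
  have base: "(perm_b c k ^^ j \<circ> perm_a c k ^^ i) ?x = c (if i = 0 then C1_entry g j else C2_entry g j)"
    if "j < 2*k" "i < 2" for j i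
    using that k_pos
    by (cases i) (simp_all add: perm_a_C1_point funpow_perm_b_C1_point funpow_perm_b_C2_point
        partner_def)
  have "inj_on (\<lambda>(j, i). perm_b c k ^^ j \<circ> perm_a c k ^^ i) ({..<2*k} \<times> {..<2})"
  proof (rule inj_onI, clarify)
    fix j i j' i' :: nat
    assume ranges: "j < 2*k" "i < 2" "j' < 2*k" "i' < 2"
      and "perm_b c k ^^ j \<circ> perm_a c k ^^ i = perm_b c k ^^ j' \<circ> perm_a c k ^^ i'"
    then have "c (if i = 0 then C1_entry g j else C2_entry g j)
        = c (if i' = 0 then C1_entry g j' else C2_entry g j')"
      using base by metis
    then show "j = j' \<and> i = i'"
      using ranges C1_point_neq_C2_point C1_point_neq_C2_point[THEN not_sym]
      by (auto simp: C1_point_eq_iff C2_point_eq_iff split: if_splits)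
  qed
  moreover have "G1 c k = (\<lambda>(j, i). perm_b c k ^^ j \<circ> perm_a c k ^^ i) ` ({..<2*k} \<times> {..<2})"
    unfolding G1_eq_metacyclic by auto
  ultimately show ?thesis
    by (simp add: card_image card_cartesian_product)
qed

lemma funpow_perm_b_no_fixed_point:
  assumes "0 < j" "j < 2*k" "x \<in> F"
  shows "(perm_b c k ^^ j) x \<noteq> x"
  using assms(3)
proof (cases rule: points_cases)
  case (1 p)
  then show ?thesis
    using assms mod_add_neq_self[of p "2*k" j] by (simp add: funpow_perm_b_C1_point C1_point_eq_iff)
next
  case (2 p)
  then show ?thesis
    using assms mod_add_neq_self[of p "2*k" j] by (simp add: funpow_perm_b_C2_point C2_point_eq_iff)
qed

lemma funpow_perm_b_comp_perm_a_no_fixed_point: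
  assumes "x \<in> F"
  shows "(perm_b c k ^^ j \<circ> perm_a c k) x \<noteq> x"
  using assms
proof (cases rule: points_cases)
  case (1 p)
  then show ?thesis
    using k_pos C1_point_neq_C2_point[THEN not_sym]
    by (simp add: perm_a_C1_point funpow_perm_b_C2_point partner_less')
next
  case (2 p)
  then show ?thesis
    using k_pos C1_point_neq_C2_point
    by (simp add: perm_a_C2_point funpow_perm_b_C1_point partner_less')
qed

lemma G1_fixed_point_free:
  assumes "h \<in> G1 c k" "h \<noteq> id" "x \<in> F"
  shows "h x \<noteq> x"
proof -
  obtain j i where h: "h = perm_b c k ^^ j \<circ> perm_a c k ^^ i" and "j < 2*k" "i < 2"
    using assms(1) unfolding G1_eq_metacyclic by blast
  show ?thesis
  proof (cases "i = 0")
    case True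
    with h assms(2) have "0 < j"
      by (cases j) auto
    with True h \<open>j < 2*k\<close> assms(3) show ?thesis
      by (simp add: funpow_perm_b_no_fixed_point)
  next
    case False
    with \<open>i < 2\<close> have "i = 1"
      by simp
    with h assms(3) show ?thesis
      using funpow_perm_b_comp_perm_a_no_fixed_point by simp
  qed
qed

end

end

lemma power_of_two_eq_4_mult_Suc:
  assumes "2 \<le> l"
  obtains g where "(2::nat) ^ l = 4*g + 4"
proof -
  obtain t where l: "l = t + 2"
    using le_Suc_ex[OF assms] by (auto simp: add.commute)
  define g where "g = (2::nat) ^ t - 1"
  have "0 < (2::nat) ^ t"
    by simp
  then have "(2::nat) ^ t = g + 1"
    unfolding g_def by simp
  then have "(2::nat) ^ l = 4*g + 4"
    unfolding l by (simp add: power_add)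
  then show ?thesis
    by (rule that)
qed

theorem theorem3p1:
  fixes l :: nat and k q :: nat and F :: "'a set" and c :: "nat \<Rightarrow> 'a"
  assumes "l \<ge> 2" and "k = 2 ^ l" and "q = 4 * k"
    and "bij_betw c {0..<q} F"
  shows "subgroup (G1 c k) (perm_group F)
    \<and> card (G1 c k) = q
    \<and> (\<forall>g \<in> G1 c k. g \<noteq> id \<longrightarrow> (\<forall>x \<in> F. g x \<noteq> x))"
proof -
  have bij: "bij_betw c {0..<4*k} F"
    using assms(3,4) by simp
  obtain g where k: "k = 4*g + 4"
    using power_of_two_eq_4_mult_Suc[OF assms(1)] assms(2) by blast
  show ?thesis
    using G1_subgroup[OF bij k] card_G1[OF bij k]
      G1_fixed_point_free[OF bij k] assms(3)
    by blast
qed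

end
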